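(* Let $\nu$ be a Krull valuation on $\mathbb{K}[x]$, $\mu$ a valuation on $\overline{\mathbb{K}}[x]$ extending $\nu$, $Q$ a key polynomial for $\nu$, and $a$ an optimizing root of $Q$. Suppose there exist an integer $e\ge1$ and a nonzero $h\in\mathbb{K}[x]$ with $\deg h<\deg Q$ and $\nu(Q^e)=\nu(h)$, and let $r=Q^e/h$. Then $\mu_{x-a}(r)=0$ and the residue of $r$ in the residue field $\overline{\mathbb{K}}(x)\mu_{x-a}$ is transcendental over $\overline{\mathbb{K}}\mu$.
   Context: $\overline{\mathbb{K}}$ is an algebraic closure of $\mathbb{K}$; $\overline{\mathbb{K}}\mu$ the residue field of $\mu$ on $\overline{\mathbb{K}}$. $\mu_{x-a}$ is the truncation of $\mu$ at $x-a$: $\mu_{x-a}(\sum_i c_i(x-a)^i)=\min_i\{\mu(c_i)+i\mu(x-a)\}$, a valuation extended to $\overline{\mathbb{K}}(x)$. For non-constant $f$, $\delta(f)=\max\{\mu(x-c):f(c)=0\}$, and a root $c$ with $\mu(x-c)=\delta(f)$ is an optimizing root. Key polynomials: for nonzero $f\in\mathbb{K}[x]$, with Hasse derivatives $\partial_bf=\sum_{i\ge b}\binom{i}{b}a_ix^{i-b}$ for $f=\sum a_ix^i$, $\epsilon(f)=\max_{1\le b\le\deg f}(\nu(f)-\nu(\partial_bf))/b$ if $\deg f>0$ and $\epsilon(f)=-\infty$ if $f$ is constant; a monic $Q$ is a key polynomial for $\nu$ if $\epsilon(f)\ge\epsilon(Q)$ implies $\deg f\ge\deg Q$ for all $f$.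 *)

theory Defs
  imports "HOL-Computational_Algebra.Polynomial" "HOL-Computational_Algebra.Fraction_Field"
begin

(* K is a subfield of the field 'L; 'L plays the role of an algebraic closure of K *)
definition is_subfield :: "'a::field set \<Rightarrow> bool" where
  "is_subfield K \<longleftrightarrow> 0 \<in> K \<and> 1 \<in> K \<and>
     (\<forall>x\<in>K. \<forall>y\<in>K. x + y \<in> K \<and> x - y \<in> K \<and> x * y \<in> K) \<and>
     (\<forall>x\<in>K. x \<noteq> 0 \<longrightarrow> inverse x \<in> K)"

definition Kpoly :: "'a::field set \<Rightarrow> 'a poly set" where
  "Kpoly K = {f. \<forall>i. coeff f i \<in> K}"

definition is_algebraic_closure_of :: "'a::field set \<Rightarrow> bool" where
  "is_algebraic_closure_of K \<longleftrightarrow> is_subfield K \<and>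
     (\<forall>p::'a poly. 0 < degree p \<longrightarrow> (\<exists>z. poly p z = 0)) \<and>
     (\<forall>z::'a. \<exists>p\<in>Kpoly K. p \<noteq> 0 \<and> poly p z = 0)"

(* a (Krull) valuation on a ring S, given by its values on nonzero elements
   (the value of 0 is infinity and is not represented) *)
definition valuation_on :: "'a::idom set \<Rightarrow> ('a \<Rightarrow> 'g::linordered_ab_group_add) \<Rightarrow> bool" where
  "valuation_on S v \<longleftrightarrow> (\<forall>x\<in>S. \<forall>y\<in>S. x \<noteq> 0 \<longrightarrow> y \<noteq> 0 \<longrightarrow>
      v (x * y) = v x + v y \<and> (x + y \<noteq> 0 \<longrightarrow> min (v x) (v y) \<le> v (x + y)))"

definition hasse_deriv :: "nat \<Rightarrow> 'a::comm_ring_1 poly \<Rightarrow> 'a poly" where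
  "hasse_deriv b f = (\<Sum>i\<in>{b..degree f}. monom (of_nat (i choose b) * coeff f i) (i - b))"

primrec nsmul :: "nat \<Rightarrow> 'g::monoid_add \<Rightarrow> 'g" where
  "nsmul 0 g = 0"
| "nsmul (Suc n) g = g + nsmul n g"

(* eps_ge nu f g  means  eps(f) \<ge> eps(g), where
   eps(f) = max_{1\<le>b\<le>deg f} (nu f - nu (hasse_deriv b f))/b  (in the divisible hull;
   terms with hasse_deriv b f = 0 contribute -infinity), eps(constant) = -infinity.
   The comparison x/b \<ge> y/c is expressed as c*x \<ge> b*y. *)
definition eps_ge :: "('a::field poly \<Rightarrow> 'g::linordered_ab_group_add) \<Rightarrow> 'a poly \<Rightarrow> 'a poly \<Rightarrow> bool" where
  "eps_ge \<nu> f g \<longleftrightarrow>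
     (if degree g = 0 then True
      else if degree f = 0 then False
      else (\<exists>b\<in>{1..degree f}. hasse_deriv b f \<noteq> 0 \<and>
              (\<forall>c\<in>{1..degree g}. hasse_deriv c g \<noteq> 0 \<longrightarrow>
                 nsmul b (\<nu> g - \<nu> (hasse_deriv c g)) \<le> nsmul c (\<nu> f - \<nu> (hasse_deriv b f)))))"

definition key_polynomial :: "'a::field set \<Rightarrow> ('a poly \<Rightarrow> 'g::linordered_ab_group_add) \<Rightarrow> 'a poly \<Rightarrow> bool" where
  "key_polynomial K \<nu> Q \<longleftrightarrow> Q \<in> Kpoly K \<and> lead_coeff Q = 1 \<and>
     (\<forall>f\<in>Kpoly K. f \<noteq> 0 \<longrightarrow> eps_ge \<nu> f Q \<longrightarrow> degree Q \<le> degree f)"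

definition optimizing_root :: "('a::field poly \<Rightarrow> 'g::linorder) \<Rightarrow> 'a poly \<Rightarrow> 'a \<Rightarrow> bool" where
  "optimizing_root \<mu> f a \<longleftrightarrow> 0 < degree f \<and> poly f a = 0 \<and>
     (\<forall>c. poly f c = 0 \<longrightarrow> \<mu> [:-c, 1:] \<le> \<mu> [:-a, 1:])"

(* truncation mu_{x-a}: f = sum c_i (x-a)^i, value min_i mu(c_i) + mu((x-a)^i) *)
definition trunc_val :: "('a::field poly \<Rightarrow> 'g::linordered_ab_group_add) \<Rightarrow> 'a \<Rightarrow> 'a poly \<Rightarrow> 'g" where
  "trunc_val \<mu> a f = Min {\<mu> [:coeff (pcompose f [:a, 1:]) i:] + \<mu> ([:-a, 1:] ^ i) | i.
                           coeff (pcompose f [:a, 1:]) i \<noteq> 0}"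

definition trunc_val_frac :: "('a::field poly \<Rightarrow> 'g::linordered_ab_group_add) \<Rightarrow> 'a \<Rightarrow> 'a poly fract \<Rightarrow> 'g" where
  "trunc_val_frac \<mu> a r = (case SOME pq. snd pq \<noteq> 0 \<and> r = Fract (fst pq) (snd pq) of
      (p, q) \<Rightarrow> trunc_val \<mu> a p - trunc_val \<mu> a q)"

definition in_val_ring :: "('f::field \<Rightarrow> 'g::linordered_ab_group_add) \<Rightarrow> 'f \<Rightarrow> bool" where
  "in_val_ring w s \<longleftrightarrow> s = 0 \<or> 0 \<le> w s"

definition in_max_ideal :: "('f::field \<Rightarrow> 'g::linordered_ab_group_add) \<Rightarrow> 'f \<Rightarrow> bool" where
  "in_max_ideal w s \<longleftrightarrow> s = 0 \<or> 0 < w s"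

(* The residue of r in the residue field of w (on the field F) is transcendental over the
   residue field of v (on the field k, embedded in F by emb, with w extending v):
   r lies in the valuation ring of w, and for every polynomial P over the residue field of v,
   written with lifted coefficients c_0..c_n in the valuation ring of v, not all in the maximal
   ideal (i.e. P nonzero), the residue of sum c_i r^i (= P(residue of r)) is nonzero. *)
definition residue_transcendental ::
  "('f::field \<Rightarrow> 'g::linordered_ab_group_add) \<Rightarrow> ('k::field \<Rightarrow> 'f) \<Rightarrow> ('k \<Rightarrow> 'g) \<Rightarrow> 'f \<Rightarrow> bool" where
  "residue_transcendental w emb v r \<longleftrightarrow> in_val_ring w r \<and>
     (\<forall>(n::nat) (c::nat \<Rightarrow> 'k).
        (\<forall>i\<le>n. in_val_ring v (c i)) \<and> (\<exists>i\<le>n. \<not> in_max_ideal v (c i)) \<longrightarrow>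
        \<not> in_max_ideal w (\<Sum>i\<le>n. emb (c i) * r ^ i))"

end

(* Over the algebraic closure, Q and h split into linear factors.  Since a is an optimizing
   root, every root c of Q satisfies mu(x - c) <= mu(x - a); and every root d of h satisfies
   mu(x - d) < mu(x - a), for otherwise, reading off the valuations of the Hasse derivatives of
   Q and h from their linear factors, eps(h) >= eps(Q) although deg h < deg Q.  On such linear
   factors the truncation mu_(x-a) agrees with mu, so mu_(x-a)(Q^e) = mu(Q^e) = mu(h) =
   mu_(x-a)(h), and moreover h(a) has value mu(h).
   A combination sum c_i r^i with coefficients of value >= 0, not all > 0, equals P / h^n with
   P = sum c_i Q^(e i) h^(n-i).  If j is the first index with c_j of value 0, then
   P = A + Q^(e j) B, where A has truncated value > n mu(h), and B(a) = c_j h(a)^(n-j) because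
   Q(a) = 0.  As the truncation of B is at most the value of B(a) and at least that of each term,
   mu_(x-a)(B) = (n-j) mu(h), hence mu_(x-a)(P) = n mu(h) and the residue of the combination
   is nonzero. *)

theory Submission
  imports Defs "HOL-Computational_Algebra.Polynomial_Factorial"
begin

lemma nsmul_add: "nsmul (m + n) g = nsmul m g + nsmul n g"
  by (induction m) (auto simp: add.assoc)

lemma nsmul_mult: "nsmul (m * n) g = nsmul m (nsmul n (g::'g::ab_group_add))"
  by (induction m) (auto simp: nsmul_add)

lemma nsmul_commute: "nsmul m (nsmul n (g::'g::ab_group_add)) = nsmul n (nsmul m g)"
  by (metis nsmul_mult mult.commute)

lemma nsmul_mono: "a \<le> b \<Longrightarrow> nsmul n a \<le> nsmul n (b::'g::ordered_ab_group_add)"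
  by (induction n) (auto intro: add_mono)

lemma sum_mult_power_divide:
  fixes r h :: "'a::field"
  assumes "h \<noteq> 0"
  shows "(\<Sum>i\<le>n. c i * (r / h) ^ i) = (\<Sum>i\<le>n. c i * r ^ i * h ^ (n - i)) / h ^ n"
  unfolding sum_divide_distrib
proof (rule sum.cong)
  fix i assume "i \<in> {..n}"
  hence "h ^ n = h ^ i * h ^ (n - i)" by (simp flip: power_add)
  thus "c i * (r / h) ^ i = c i * r ^ i * h ^ (n - i) / h ^ n"
    using assms by (simp add: power_divide)
qed simp

lemma to_fract_power: "to_fract (x ^ n) = to_fract x ^ n"
  by (induction n) simp_all

lemma to_fract_smult: "to_fract (smult c p) = to_fract [:c:] * to_fract p"
  by (simp flip: to_fract_mult)

section \<open>Valuations\<close>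

locale valuation =
  fixes v :: "'a::idom \<Rightarrow> 'g::linordered_ab_group_add"
  assumes valuation: "valuation_on UNIV v"
begin

lemma val_mult: "x \<noteq> 0 \<Longrightarrow> y \<noteq> 0 \<Longrightarrow> v (x * y) = v x + v y"
  using valuation unfolding valuation_on_def by blast

lemma val_add_ge: "x \<noteq> 0 \<Longrightarrow> y \<noteq> 0 \<Longrightarrow> x + y \<noteq> 0 \<Longrightarrow> min (v x) (v y) \<le> v (x + y)"
  using valuation unfolding valuation_on_def by blast

lemma val_one: "v 1 = 0"
  using val_mult[of 1 1] by simp

lemma val_uminus: "v (- x) = v x"
proof (cases "x = 0")
  case False
  have "v (-1) + v (-1) = 0"
    using val_mult[of "-1" "-1"] val_one by simp
  hence "v (-1) = 0" by (simp add: double_zero_sym)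
  thus ?thesis using val_mult[of "-1" x] False by simp
qed simp

lemma val_power: "x \<noteq> 0 \<Longrightarrow> v (x ^ n) = nsmul n (v x)"
  by (induction n) (auto simp: val_one val_mult)

lemma val_prod_list: "0 \<notin> set xs \<Longrightarrow> v (prod_list xs) = sum_list (map v xs)"
  by (induction xs) (auto simp: val_one val_mult prod_list_zero_iff)

lemma val_add_geI:
  "x + y \<noteq> 0 \<Longrightarrow> (x \<noteq> 0 \<Longrightarrow> m \<le> v x) \<Longrightarrow> (y \<noteq> 0 \<Longrightarrow> m \<le> v y) \<Longrightarrow> m \<le> v (x + y)"
  by (cases "x = 0"; cases "y = 0")
    (auto dest!: val_add_ge[of x y] simp: min_le_iff_disj intro: order_trans)

lemma val_add_gtI:
  "x + y \<noteq> 0 \<Longrightarrow> (x \<noteq> 0 \<Longrightarrow> m < v x) \<Longrightarrow> (y \<noteq> 0 \<Longrightarrow> m < v y) \<Longrightarrow> m < v (x + y)"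
  by (cases "x = 0"; cases "y = 0")
    (auto dest!: val_add_ge[of x y] simp: min_le_iff_disj intro: order_less_le_trans)

lemma val_add_eq_strict:
  assumes y: "y \<noteq> 0" and lt: "x \<noteq> 0 \<Longrightarrow> v y < v x"
  shows "x + y \<noteq> 0 \<and> v (x + y) = v y"
proof (cases "x = 0")
  case False
  with lt have lt: "v y < v x" by blast
  have nz: "x + y \<noteq> 0"
  proof
    assume "x + y = 0"
    hence "y = - x" by (simp add: eq_neg_iff_add_eq_0 add.commute)
    thus False using lt val_uminus[of x] by simp
  qed
  have "v y \<le> v (x + y)"
    using val_add_ge[OF False y nz] lt by (simp add: min_def split: if_splits)
  moreover have "min (v (x + y)) (v (- x)) \<le> v y"
    using val_add_ge[OF nz, of "- x"] False y by simp
  hence "v (x + y) \<le> v y"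
    using lt val_uminus[of x] by (simp add: min_def split: if_splits)
  ultimately show ?thesis using nz by simp
qed (use y in simp)

lemma val_sum_geI:
  "finite A \<Longrightarrow> (\<And>j. j \<in> A \<Longrightarrow> t j \<noteq> 0 \<Longrightarrow> m \<le> v (t j)) \<Longrightarrow> sum t A \<noteq> 0 \<Longrightarrow> m \<le> v (sum t A)"
proof (induction A rule: finite_induct)
  case (insert x F)
  show ?case unfolding sum.insert[OF insert(1,2)]
    by (rule val_add_geI) (use insert in auto)
qed simp

lemma val_sum_gtI:
  "finite A \<Longrightarrow> (\<And>j. j \<in> A \<Longrightarrow> t j \<noteq> 0 \<Longrightarrow> m < v (t j)) \<Longrightarrow> sum t A \<noteq> 0 \<Longrightarrow> m < v (sum t A)"
proof (induction A rule: finite_induct)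
  case (insert x F)
  show ?case unfolding sum.insert[OF insert(1,2)]
    by (rule val_add_gtI) (use insert in auto)
qed simp

lemma val_sum_eq_single:
  assumes "finite A" "j \<in> A" "t j \<noteq> 0"
    and "\<And>i. i \<in> A \<Longrightarrow> i \<noteq> j \<Longrightarrow> t i \<noteq> 0 \<Longrightarrow> v (t j) < v (t i)"
  shows "sum t A \<noteq> 0 \<and> v (sum t A) = v (t j)"
proof -
  have "sum t A = sum t (A - {j}) + t j"
    using assms(1,2) by (simp add: sum.remove add.commute)
  moreover have "sum t (A - {j}) \<noteq> 0 \<Longrightarrow> v (t j) < v (sum t (A - {j}))"
    by (rule val_sum_gtI) (use assms in auto)
  ultimately show ?thesis using val_add_eq_strict[OF assms(3)] by simp
qed

end

section \<open>Gauss valuations\<close>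

definition gauss_val :: "('a::zero \<Rightarrow> 'g::{monoid_add,linorder}) \<Rightarrow> 'g \<Rightarrow> 'a poly \<Rightarrow> 'g" where
  "gauss_val w \<delta> F = Min {w (coeff F i) + nsmul i \<delta> | i. coeff F i \<noteq> 0}"

context
  fixes w :: "'a::zero \<Rightarrow> 'g::linordered_ab_group_add" and \<delta> :: 'g
begin

lemma finite_gauss_weights: "finite {w (coeff F i) + nsmul i \<delta> | i. coeff F i \<noteq> 0}"
proof -
  have "{w (coeff F i) + nsmul i \<delta> | i. coeff F i \<noteq> 0}
      \<subseteq> (\<lambda>i. w (coeff F i) + nsmul i \<delta>) ` {..degree F}"
    using le_degree by blast
  thus ?thesis by (rule finite_subset) simp
qed

lemma gauss_val_le: "coeff F i \<noteq> 0 \<Longrightarrow> gauss_val w \<delta> F \<le> w (coeff F i) + nsmul i \<delta>"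
  unfolding gauss_val_def by (rule Min_le[OF finite_gauss_weights]) blast

lemma gauss_val_eqI:
  "(\<And>i. coeff F i \<noteq> 0 \<Longrightarrow> m \<le> w (coeff F i) + nsmul i \<delta>) \<Longrightarrow> coeff F j \<noteq> 0 \<Longrightarrow>
    w (coeff F j) + nsmul j \<delta> = m \<Longrightarrow> gauss_val w \<delta> F = m"
  unfolding gauss_val_def by (rule Min_eqI[OF finite_gauss_weights]) auto

lemma gauss_val_attained_least:
  assumes "F \<noteq> 0"
  obtains i where "coeff F i \<noteq> 0" "w (coeff F i) + nsmul i \<delta> = gauss_val w \<delta> F"
    "\<And>j. j < i \<Longrightarrow> coeff F j \<noteq> 0 \<Longrightarrow> gauss_val w \<delta> F < w (coeff F j) + nsmul j \<delta>"
proof -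
  define P where "P i \<longleftrightarrow> coeff F i \<noteq> 0 \<and> w (coeff F i) + nsmul i \<delta> = gauss_val w \<delta> F" for i
  have "gauss_val w \<delta> F \<in> {w (coeff F i) + nsmul i \<delta> | i. coeff F i \<noteq> 0}"
    unfolding gauss_val_def using assms
    by (intro Min_in[OF finite_gauss_weights]) (auto intro: exI[of _ "degree F"])
  hence "\<exists>i. P i" by (auto simp: P_def)
  hence "P (Least P)" by (rule LeastI_ex)
  moreover have "gauss_val w \<delta> F < w (coeff F j) + nsmul j \<delta>" if "j < Least P" "coeff F j \<noteq> 0" for j
    using not_less_Least[OF that(1)] gauss_val_le[OF that(2)] that(2) by (auto simp: P_def less_le)
  ultimately show thesis using that unfolding P_def by blast
qed

end

context valuation
begin

lemma gauss_val_mult_le_coeff: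
  assumes "coeff (F * G) k \<noteq> 0"
  shows "gauss_val v \<delta> F + gauss_val v \<delta> G \<le> v (coeff (F * G) k) + nsmul k \<delta>"
proof -
  have "gauss_val v \<delta> F + gauss_val v \<delta> G - nsmul k \<delta> \<le> v (\<Sum>i\<le>k. coeff F i * coeff G (k - i))"
  proof (rule val_sum_geI)
    fix i assume i: "i \<in> {..k}" and nz: "coeff F i * coeff G (k - i) \<noteq> 0"
    have "gauss_val v \<delta> F + gauss_val v \<delta> G
        \<le> (v (coeff F i) + nsmul i \<delta>) + (v (coeff G (k - i)) + nsmul (k - i) \<delta>)"
      using nz by (intro add_mono gauss_val_le) auto
    also have "\<dots> = v (coeff F i * coeff G (k - i)) + nsmul k \<delta>"
      using nz i nsmul_add[of i "k - i" \<delta>] by (simp add: val_mult algebra_simps)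
    finally show "gauss_val v \<delta> F + gauss_val v \<delta> G - nsmul k \<delta> \<le> v (coeff F i * coeff G (k - i))"
      by (simp add: diff_le_eq)
  qed (use assms in \<open>auto simp: coeff_mult\<close>)
  thus ?thesis by (simp add: coeff_mult diff_le_eq)
qed

lemma gauss_val_mult:
  assumes F: "F \<noteq> 0" and G: "G \<noteq> 0"
  shows "gauss_val v \<delta> (F * G) = gauss_val v \<delta> F + gauss_val v \<delta> G"
proof -
  obtain i where i: "coeff F i \<noteq> 0" "v (coeff F i) + nsmul i \<delta> = gauss_val v \<delta> F"
    "\<And>j. j < i \<Longrightarrow> coeff F j \<noteq> 0 \<Longrightarrow> gauss_val v \<delta> F < v (coeff F j) + nsmul j \<delta>"
    using gauss_val_attained_least[OF F] by blast
  obtain j where j: "coeff G j \<noteq> 0" "v (coeff G j) + nsmul j \<delta> = gauss_val v \<delta> G"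
    "\<And>l. l < j \<Longrightarrow> coeff G l \<noteq> 0 \<Longrightarrow> gauss_val v \<delta> G < v (coeff G l) + nsmul l \<delta>"
    using gauss_val_attained_least[OF G] by blast
  \<comment> \<open>With \<open>i\<close>, \<open>j\<close> the least indices attaining the minima, coefficient \<open>i + j\<close> of the
    product has a unique term of minimal weight.\<close>
  define t where "t l = coeff F l * coeff G (i + j - l)" for l
  have weight: "v (t l) + nsmul (i + j) \<delta>
      = (v (coeff F l) + nsmul l \<delta>) + (v (coeff G (i + j - l)) + nsmul (i + j - l) \<delta>)"
    if "t l \<noteq> 0" "l \<le> i + j" for l
    using that nsmul_add[of l "i + j - l" \<delta>] by (simp add: t_def val_mult algebra_simps)
  have "sum t {..i + j} \<noteq> 0 \<and> v (sum t {..i + j}) = v (t i)"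
  proof (rule val_sum_eq_single)
    fix l assume l: "l \<in> {..i + j}" "l \<noteq> i" "t l \<noteq> 0"
    have "gauss_val v \<delta> F + gauss_val v \<delta> G
        < (v (coeff F l) + nsmul l \<delta>) + (v (coeff G (i + j - l)) + nsmul (i + j - l) \<delta>)"
    proof (cases "l < i")
      case True
      thus ?thesis using l(3) i(3) gauss_val_le by (intro add_less_le_mono) (auto simp: t_def)
    next
      case False
      hence "i + j - l < j" using l(1,2) by auto
      thus ?thesis using l(3) j(3) gauss_val_le by (intro add_le_less_mono) (auto simp: t_def)
    qed
    moreover have "t i \<noteq> 0" using i(1) j(1) by (simp add: t_def)
    ultimately have "v (t i) + nsmul (i + j) \<delta> < v (t l) + nsmul (i + j) \<delta>"
      using weight[of i] weight[of l] l i(2) j(2) by simp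
    thus "v (t i) < v (t l)" by simp
  qed (use i(1) j(1) in \<open>auto simp: t_def\<close>)
  moreover have "v (t i) + nsmul (i + j) \<delta> = gauss_val v \<delta> F + gauss_val v \<delta> G"
    using weight[of i] i j by (simp add: t_def)
  ultimately show ?thesis
    using gauss_val_mult_le_coeff
    by (intro gauss_val_eqI[where j = "i + j"]) (auto simp: coeff_mult t_def)
qed

lemma gauss_val_add:
  assumes "F \<noteq> 0" "G \<noteq> 0" "F + G \<noteq> 0"
  shows "min (gauss_val v \<delta> F) (gauss_val v \<delta> G) \<le> gauss_val v \<delta> (F + G)"
proof -
  obtain k where k: "coeff (F + G) k \<noteq> 0" "v (coeff (F + G) k) + nsmul k \<delta> = gauss_val v \<delta> (F + G)"
    using gauss_val_attained_least[OF assms(3)] by blast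
  have "min (gauss_val v \<delta> F) (gauss_val v \<delta> G) - nsmul k \<delta> \<le> v (coeff F k + coeff G k)"
  proof (rule val_add_geI)
    show "min (gauss_val v \<delta> F) (gauss_val v \<delta> G) - nsmul k \<delta> \<le> v (coeff F k)" if "coeff F k \<noteq> 0"
      using gauss_val_le[OF that, of v \<delta>] by (simp add: diff_le_eq min.coboundedI1)
    show "min (gauss_val v \<delta> F) (gauss_val v \<delta> G) - nsmul k \<delta> \<le> v (coeff G k)" if "coeff G k \<noteq> 0"
      using gauss_val_le[OF that, of v \<delta>] by (simp add: diff_le_eq min.coboundedI2)
  qed (use k in simp)
  thus ?thesis using k by (simp add: diff_le_eq)
qed

lemma valuation_gauss_val: "valuation (gauss_val v \<delta>)"
  by unfold_locales (simp add: valuation_on_def gauss_val_mult gauss_val_add)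

end

lemma coeff_hasse_deriv: "coeff (hasse_deriv b f) k = of_nat ((k + b) choose b) * coeff f (k + b)"
proof -
  have "coeff (hasse_deriv b f) k
      = (\<Sum>i\<in>{b..degree f}. if i = k + b then of_nat (i choose b) * coeff f i else 0)"
    unfolding hasse_deriv_def coeff_sum coeff_monom by (rule sum.cong) auto
  also have "\<dots> = of_nat ((k + b) choose b) * coeff f (k + b)"
    by (cases "k + b \<le> degree f") (simp_all add: sum.delta coeff_eq_0)
  finally show ?thesis .
qed

lemma hasse_deriv_0 [simp]: "hasse_deriv 0 f = f"
  by (rule poly_eqI) (simp add: coeff_hasse_deriv)

lemma hasse_deriv_const: "b \<noteq> 0 \<Longrightarrow> hasse_deriv b [:c:] = 0"
  by (rule poly_eqI) (auto simp: coeff_hasse_deriv coeff_pCons split: nat.splits)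

lemma hasse_deriv_Suc_linear_mult:
  "hasse_deriv (Suc b) ([:-c, 1:] * g) = [:-c, 1:] * hasse_deriv (Suc b) g + hasse_deriv b g"
proof (rule poly_eqI)
  fix k
  have lin: "coeff ([:-c, 1:] * p) n = (if n = 0 then 0 else coeff p (n - 1)) - c * coeff p n"
    for p :: "'a poly" and n
    by (cases n) (auto simp: coeff_pCons algebra_simps)
  show "coeff (hasse_deriv (Suc b) ([:-c, 1:] * g)) k
      = coeff ([:-c, 1:] * hasse_deriv (Suc b) g + hasse_deriv b g) k"
    by (cases k) (simp_all add: lin coeff_hasse_deriv algebra_simps)
qed

lemma eps_geI:
  fixes \<nu> :: "'a::field poly \<Rightarrow> 'g::linordered_ab_group_add"
  assumes "0 < degree g" "s \<in> {1..degree f}" "hasse_deriv s f \<noteq> 0"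
    and f: "\<nu> f - \<nu> (hasse_deriv s f) = nsmul s D"
    and g: "\<And>b. b \<in> {1..degree g} \<Longrightarrow> hasse_deriv b g \<noteq> 0 \<Longrightarrow> \<nu> g - \<nu> (hasse_deriv b g) \<le> nsmul b D"
  shows "eps_ge \<nu> f g"
proof -
  have "nsmul s (\<nu> g - \<nu> (hasse_deriv b g)) \<le> nsmul b (\<nu> f - \<nu> (hasse_deriv s f))"
    if "b \<in> {1..degree g}" "hasse_deriv b g \<noteq> 0" for b
    using nsmul_mono[OF g[OF that], of s] unfolding f by (simp add: nsmul_commute)
  thus ?thesis using assms(1-3) unfolding eps_ge_def by auto
qed

context
  fixes K :: "'a::field set"
  assumes K: "is_subfield K"
begin

lemma subfield_sum: "finite A \<Longrightarrow> (\<And>i. i \<in> A \<Longrightarrow> f i \<in> K) \<Longrightarrow> sum f A \<in> K"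
  by (induction A rule: finite_induct) (use K in \<open>auto simp: is_subfield_def\<close>)

lemma subfield_of_nat: "of_nat n \<in> K"
  using K unfolding is_subfield_def by (induction n) auto

lemma Kpoly_mult: "p \<in> Kpoly K \<Longrightarrow> q \<in> Kpoly K \<Longrightarrow> p * q \<in> Kpoly K"
  using K unfolding Kpoly_def is_subfield_def by (auto simp: coeff_mult intro!: subfield_sum)

lemma Kpoly_power: "p \<in> Kpoly K \<Longrightarrow> p ^ n \<in> Kpoly K"
proof (induction n)
  case 0
  show ?case using K by (simp add: Kpoly_def coeff_1 is_subfield_def)
qed (simp add: Kpoly_mult)

lemma Kpoly_hasse_deriv: "p \<in> Kpoly K \<Longrightarrow> hasse_deriv b p \<in> Kpoly K"
  using K subfield_of_nat unfolding Kpoly_def is_subfield_def by (auto simp: coeff_hasse_deriv)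

end

definition lprod :: "'a::comm_ring_1 list \<Rightarrow> 'a poly" where
  "lprod cs = prod_list (map (\<lambda>c. [:-c, 1:]) cs)"

lemma lprod_Nil [simp]: "lprod [] = 1"
  and lprod_Cons [simp]: "lprod (c # cs) = [:-c, 1:] * lprod cs"
  by (auto simp: lprod_def)

lemma lprod_nonzero: "lprod (cs :: 'a::idom list) \<noteq> 0"
  by (induction cs) (simp_all del: mult_pCons_left mult_pCons_right)

lemma poly_lprod_eq_0_iff: "poly (lprod cs) z = 0 \<longleftrightarrow> z \<in> set (cs :: 'a::idom list)"
  by (induction cs) auto

lemma split_into_linear_factors:
  fixes p :: "'a::field poly"
  assumes roots: "\<forall>q::'a poly. 0 < degree q \<longrightarrow> (\<exists>z. poly q z = 0)" and "p \<noteq> 0"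
  obtains cs where "p = smult (lead_coeff p) (lprod cs)" "length cs = degree p"
  using assms(2)
proof (induction "degree p" arbitrary: p thesis)
  case 0
  then show ?case by (auto elim: degree_eq_zeroE)
next
  case (Suc n)
  obtain z where "poly p z = 0" using roots Suc.hyps(2) by (metis zero_less_Suc)
  then obtain q where q: "p = [:-z, 1:] * q" by (metis dvdE poly_eq_0_iff_dvd)
  have "q \<noteq> 0" using q Suc.prems by auto
  moreover have "degree q = n"
    using Suc.hyps(2) q \<open>q \<noteq> 0\<close> by (simp del: mult_pCons_left add: degree_mult_eq)
  ultimately obtain cs where cs: "q = smult (lead_coeff q) (lprod cs)" "length cs = n"
    using Suc.hyps(1) by metis
  have "lead_coeff p = lead_coeff q" using q by (simp del: mult_pCons_left add: lead_coeff_mult)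
  hence "p = smult (lead_coeff p) (lprod (z # cs))"
    using q cs by (metis lprod_Cons mult_smult_right)
  with Suc.prems(1) show ?case using Suc.hyps(2) cs(2) by (metis length_Cons)
qed

section \<open>Valuations of Hasse derivatives of split polynomials\<close>

locale poly_valuation = valuation v for v :: "'a::field poly \<Rightarrow> 'g::linordered_ab_group_add"
begin

definition last_hasse_minimizer :: "'g \<Rightarrow> 'a poly \<Rightarrow> nat \<Rightarrow> bool" where
  "last_hasse_minimizer D f s \<longleftrightarrow>
     hasse_deriv s f \<noteq> 0 \<and> v (hasse_deriv s f) + nsmul s D = v f \<and>
     (\<forall>b. hasse_deriv b f \<noteq> 0 \<longrightarrow> v f \<le> v (hasse_deriv b f) + nsmul b D \<and>
        (s < b \<longrightarrow> v f < v (hasse_deriv b f) + nsmul b D))"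

lemma last_hasse_minimizer_const:
  assumes "c \<noteq> 0" shows "last_hasse_minimizer D [:c:] 0"
proof -
  have "b = 0" if "hasse_deriv b [:c:] \<noteq> 0" for b
    using hasse_deriv_const that by blast
  with assms show ?thesis unfolding last_hasse_minimizer_def by fastforce
qed

context
  fixes D :: 'g and c :: 'a and F :: "'a poly" and s :: nat
  assumes F: "F \<noteq> 0" and min: "last_hasse_minimizer D F s" and cD: "v [:-c, 1:] \<le> D"
begin

text \<open>The first and second term are the two summands in \<open>hasse_deriv_Suc_linear_mult\<close>.\<close>

private lemma val_linear_mult: "G \<noteq> 0 \<Longrightarrow> v ([:-c, 1:] * G) = v [:-c, 1:] + v G"
  by (simp add: val_mult del: mult_pCons_left mult_pCons_right)

private lemma min_at: "hasse_deriv s F \<noteq> 0" "v (hasse_deriv s F) + nsmul s D = v F"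
  and min_ge: "hasse_deriv b F \<noteq> 0 \<Longrightarrow> v F \<le> v (hasse_deriv b F) + nsmul b D"
  and min_gt: "s < b \<Longrightarrow> hasse_deriv b F \<noteq> 0 \<Longrightarrow> v F < v (hasse_deriv b F) + nsmul b D"
  using min unfolding last_hasse_minimizer_def by auto

private lemma first_term_ge:
  assumes "hasse_deriv (Suc b) F \<noteq> 0"
  shows "v ([:-c, 1:] * F) - nsmul (Suc b) D \<le> v ([:-c, 1:] * hasse_deriv (Suc b) F)"
  using min_ge[OF assms] unfolding val_linear_mult[OF F] val_linear_mult[OF assms]
  by (simp add: diff_le_eq add.assoc)

private lemma first_term_gt:
  assumes "s < Suc b" "hasse_deriv (Suc b) F \<noteq> 0"
  shows "v ([:-c, 1:] * F) - nsmul (Suc b) D < v ([:-c, 1:] * hasse_deriv (Suc b) F)"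
  using min_gt[OF assms] unfolding val_linear_mult[OF F] val_linear_mult[OF assms(2)]
  by (simp add: diff_less_eq add.assoc)

private lemma second_term_ge:
  assumes "hasse_deriv b F \<noteq> 0"
  shows "v ([:-c, 1:] * F) - nsmul (Suc b) D \<le> v (hasse_deriv b F)"
  using add_mono[OF cD min_ge[OF assms]] unfolding val_linear_mult[OF F]
  by (simp add: diff_le_eq algebra_simps)

private lemma second_term_gt:
  assumes "v [:-c, 1:] < D \<or> s < b" "hasse_deriv b F \<noteq> 0"
  shows "v ([:-c, 1:] * F) - nsmul (Suc b) D < v (hasse_deriv b F)"
proof -
  have "v [:-c, 1:] + v F < D + (v (hasse_deriv b F) + nsmul b D)"
    using assms(1)
  proof
    assume "v [:-c, 1:] < D"
    thus ?thesis using add_less_le_mono min_ge[OF assms(2)] by blast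
  next
    assume "s < b"
    thus ?thesis using add_le_less_mono[OF cD] min_gt[OF _ assms(2)] by blast
  qed
  thus ?thesis unfolding val_linear_mult[OF F] by (simp add: diff_less_eq algebra_simps)
qed

lemma hasse_deriv_linear_mult_ge:
  assumes "hasse_deriv b ([:-c, 1:] * F) \<noteq> 0"
  shows "v ([:-c, 1:] * F) \<le> v (hasse_deriv b ([:-c, 1:] * F)) + nsmul b D"
proof (cases b)
  case (Suc b')
  have "v ([:-c, 1:] * F) - nsmul b D \<le> v (hasse_deriv b ([:-c, 1:] * F))"
    using assms unfolding Suc hasse_deriv_Suc_linear_mult
    by (intro val_add_geI first_term_ge second_term_ge) (auto dest: mult_not_zero)
  thus ?thesis by (simp add: diff_le_eq)
qed simp

lemma hasse_deriv_linear_mult_gt: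
  assumes "(if v [:-c, 1:] = D then Suc s else s) < b" "hasse_deriv b ([:-c, 1:] * F) \<noteq> 0"
  shows "v ([:-c, 1:] * F) < v (hasse_deriv b ([:-c, 1:] * F)) + nsmul b D"
proof -
  obtain b' where b: "b = Suc b'" using assms(1) by (cases b) auto
  have "v [:-c, 1:] < D \<or> s < b'" using assms(1) cD b by (auto split: if_splits)
  hence "v ([:-c, 1:] * F) - nsmul b D < v (hasse_deriv b ([:-c, 1:] * F))"
    using assms unfolding b hasse_deriv_Suc_linear_mult
    by (intro val_add_gtI first_term_gt second_term_gt) (auto dest: mult_not_zero split: if_splits)
  thus ?thesis by (simp add: diff_less_eq)
qed

lemma hasse_deriv_linear_mult_at:
  defines "s' \<equiv> if v [:-c, 1:] = D then Suc s else s"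
  shows "hasse_deriv s' ([:-c, 1:] * F) \<noteq> 0 \<and>
    v (hasse_deriv s' ([:-c, 1:] * F)) + nsmul s' D = v ([:-c, 1:] * F)"
proof (cases "v [:-c, 1:] = D")
  case True
  have eq: "v ([:-c, 1:] * F) - nsmul (Suc s) D = v (hasse_deriv s F)"
    using val_linear_mult[OF F] min_at(2) True by (simp add: algebra_simps)
  have "v (hasse_deriv s F) < v ([:-c, 1:] * hasse_deriv (Suc s) F)"
    if "[:-c, 1:] * hasse_deriv (Suc s) F \<noteq> 0"
    using first_term_gt[of s] mult_not_zero[OF that] eq by simp
  from val_add_eq_strict[OF min_at(1) this]
  have "hasse_deriv (Suc s) ([:-c, 1:] * F) \<noteq> 0 \<and>
    v (hasse_deriv (Suc s) ([:-c, 1:] * F)) = v (hasse_deriv s F)"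
    unfolding hasse_deriv_Suc_linear_mult by blast
  thus ?thesis unfolding s'_def using True eq by (simp add: diff_eq_eq)
next
  case False
  show ?thesis
  proof (cases s)
    case 0
    have "[:-c, 1:] * F \<noteq> 0" using F by (simp del: mult_pCons_left)
    thus ?thesis using False 0 unfolding s'_def by simp
  next
    case (Suc s0)
    have nz: "[:-c, 1:] * hasse_deriv s F \<noteq> 0" using min_at(1) by (simp del: mult_pCons_left)
    have eq: "v ([:-c, 1:] * F) - nsmul s D = v ([:-c, 1:] * hasse_deriv s F)"
      using val_linear_mult[OF F] val_linear_mult[OF min_at(1)] min_at(2)
      by (simp add: algebra_simps)
    have "v ([:-c, 1:] * hasse_deriv s F) < v (hasse_deriv s0 F)" if "hasse_deriv s0 F \<noteq> 0"
      using second_term_gt[OF _ that] False cD eq Suc by simp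
    from val_add_eq_strict[OF nz this]
    have "hasse_deriv s ([:-c, 1:] * F) \<noteq> 0 \<and>
      v (hasse_deriv s ([:-c, 1:] * F)) = v ([:-c, 1:] * hasse_deriv s F)"
      unfolding Suc hasse_deriv_Suc_linear_mult by (simp add: add.commute)
    thus ?thesis unfolding s'_def using False eq by (simp add: diff_eq_eq)
  qed
qed

end

lemma last_hasse_minimizer_split:
  assumes "lc \<noteq> 0" "\<forall>c\<in>set cs. v [:-c, 1:] \<le> D"
  shows "last_hasse_minimizer D (smult lc (lprod cs)) (length (filter (\<lambda>c. v [:-c, 1:] = D) cs))"
  using assms(2)
proof (induction cs)
  case Nil
  show ?case using last_hasse_minimizer_const[OF assms(1)] by simp
next
  case (Cons c cs)
  define F where "F = smult lc (lprod cs)"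
  define s where "s = length (filter (\<lambda>c. v [:-c, 1:] = D) cs)"
  have F: "F \<noteq> 0" using assms(1) lprod_nonzero by (simp add: F_def)
  have min: "last_hasse_minimizer D F s" and cD: "v [:-c, 1:] \<le> D"
    using Cons by (simp_all add: F_def s_def)
  have "smult lc (lprod (c # cs)) = [:-c, 1:] * F"
    by (simp add: F_def del: mult_pCons_left)
  moreover have "length (filter (\<lambda>c. v [:-c, 1:] = D) (c # cs))
      = (if v [:-c, 1:] = D then Suc s else s)"
    by (simp add: s_def)
  moreover have "last_hasse_minimizer D ([:-c, 1:] * F) (if v [:-c, 1:] = D then Suc s else s)"
    unfolding last_hasse_minimizer_def
    using hasse_deriv_linear_mult_at[OF F min cD] hasse_deriv_linear_mult_ge[OF F min cD]
      hasse_deriv_linear_mult_gt[OF F min cD] by blast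
  ultimately show ?case by simp
qed

section \<open>Truncation\<close>

sublocale const: valuation "\<lambda>c. v [:c:]"
proof
  show "valuation_on UNIV (\<lambda>c. v [:c:])"
    unfolding valuation_on_def
  proof (intro ballI impI conjI)
    fix x y :: 'a assume "x \<noteq> 0" "y \<noteq> 0"
    thus "v [:x * y:] = v [:x:] + v [:y:]"
      using val_mult[of "[:x:]" "[:y:]"] by (simp add: mult.commute)
    assume "x + y \<noteq> 0"
    thus "min (v [:x:]) (v [:y:]) \<le> v [:x + y:]"
      using val_add_ge[of "[:x:]" "[:y:]"] \<open>x \<noteq> 0\<close> \<open>y \<noteq> 0\<close> by simp
  qed
qed

lemma trunc_val_eq_gauss_val:
  "trunc_val v a f = gauss_val (\<lambda>c. v [:c:]) (v [:-a, 1:]) (pcompose f [:a, 1:])"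
  unfolding trunc_val_def gauss_val_def by (simp add: val_power)

lemma valuation_trunc_val: "valuation (trunc_val v a)"
proof
  interpret gauss: valuation "gauss_val (\<lambda>c. v [:c:]) (v [:-a, 1:])"
    by (rule const.valuation_gauss_val)
  have shift_nz: "pcompose f [:a, 1:] \<noteq> 0" if "f \<noteq> 0" for f :: "'a poly"
    using pcompose_eq_0[of f "[:a, 1:]"] that by auto
  show "valuation_on UNIV (trunc_val v a)"
    unfolding valuation_on_def
  proof (intro ballI impI conjI)
    fix f g :: "'a poly" assume f: "f \<noteq> 0" and g: "g \<noteq> 0"
    show "trunc_val v a (f * g) = trunc_val v a f + trunc_val v a g"
      unfolding trunc_val_eq_gauss_val pcompose_mult
      by (rule gauss.val_mult[OF shift_nz[OF f] shift_nz[OF g]])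
    assume "f + g \<noteq> 0"
    from shift_nz[OF this] show "min (trunc_val v a f) (trunc_val v a g) \<le> trunc_val v a (f + g)"
      unfolding trunc_val_eq_gauss_val pcompose_add
      by (rule gauss.val_add_ge[OF shift_nz[OF f] shift_nz[OF g]])
  qed
qed

lemma trunc_val_const: "c \<noteq> 0 \<Longrightarrow> trunc_val v a [:c:] = v [:c:]"
  unfolding trunc_val_eq_gauss_val
  by (rule gauss_val_eqI[where j = 0]) (auto simp: coeff_pCons split: nat.splits)

lemma trunc_val_le_eval: "poly f a \<noteq> 0 \<Longrightarrow> trunc_val v a f \<le> v [:poly f a:]"
  unfolding trunc_val_eq_gauss_val using gauss_val_le[of "pcompose f [:a, 1:]" 0] by simp

lemma const_val_diff_le:
  assumes "a \<noteq> c"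
  shows "min (v [:-a, 1:]) (v [:-c, 1:]) \<le> v [:a - c:]"
proof -
  have "[:a - c:] = - [:-a, 1:] + [:-c, 1:]" by simp
  thus ?thesis
    using val_add_ge[of "- [:-a, 1:]" "[:-c, 1:]"] val_uminus[of "[:-a, 1:]"] assms by simp
qed

lemma const_val_diff_eq:
  assumes "v [:-c, 1:] < v [:-a, 1:]"
  shows "v [:a - c:] = v [:-c, 1:]"
proof -
  have "[:a - c:] = - [:-a, 1:] + [:-c, 1:]" by simp
  thus ?thesis
    using val_add_eq_strict[of "[:-c, 1:]" "- [:-a, 1:]"] val_uminus[of "[:-a, 1:]"] assms by simp
qed

lemma trunc_val_linear:
  assumes "v [:-c, 1:] \<le> v [:-a, 1:]"
  shows "trunc_val v a [:-c, 1:] = v [:-c, 1:]"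
proof -
  have shift: "pcompose [:-c, 1:] [:a, 1:] = [:a - c, 1:]" by (simp add: pcompose_pCons)
  have ge: "v [:-c, 1:] \<le> v [:a - c:]" if "a \<noteq> c"
    using const_val_diff_le[OF that] assms by (simp add: min_absorb2)
  have coeffs: "coeff [:a - c, 1:] i \<noteq> 0 \<Longrightarrow> i = 0 \<and> a \<noteq> c \<or> i = 1" for i
    by (cases i) (auto simp: coeff_pCons split: nat.split_asm)
  show ?thesis unfolding trunc_val_eq_gauss_val shift
  proof (cases "v [:-c, 1:] = v [:-a, 1:]")
    case True
    thus "gauss_val (\<lambda>c. v [:c:]) (v [:-a, 1:]) [:a - c, 1:] = v [:-c, 1:]"
      using ge assms by (intro gauss_val_eqI[where j = 1]) (auto dest!: coeffs simp: const.val_one)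
  next
    case False
    hence "v [:-c, 1:] < v [:-a, 1:]" using assms by simp
    thus "gauss_val (\<lambda>c. v [:c:]) (v [:-a, 1:]) [:a - c, 1:] = v [:-c, 1:]"
      using const_val_diff_eq by (intro gauss_val_eqI[where j = 0])
        (auto dest!: coeffs simp: const.val_one less_imp_le)
  qed
qed


lemma val_smult_lprod:
  assumes "lc \<noteq> 0"
  shows "v (smult lc (lprod cs)) = v [:lc:] + sum_list (map (\<lambda>c. v [:-c, 1:]) cs)"
proof -
  have "v (prod_list ([:lc:] # map (\<lambda>c. [:-c, 1:]) cs))
      = sum_list (map v ([:lc:] # map (\<lambda>c. [:-c, 1:]) cs))"
    by (rule val_prod_list) (use assms in auto)
  thus ?thesis by (simp add: lprod_def o_def)
qed

lemma trunc_val_smult_lprod: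
  assumes "lc \<noteq> 0" "\<forall>c\<in>set cs. v [:-c, 1:] \<le> v [:-a, 1:]"
  shows "trunc_val v a (smult lc (lprod cs)) = v (smult lc (lprod cs))"
proof -
  interpret tv: poly_valuation "trunc_val v a"
    by (rule poly_valuation.intro, rule valuation_trunc_val)
  show ?thesis using tv.val_smult_lprod val_smult_lprod assms
    by (simp add: trunc_val_const trunc_val_linear cong: map_cong)
qed

lemma eval_smult_lprod:
  assumes "lc \<noteq> 0" "\<forall>c\<in>set cs. v [:-c, 1:] < v [:-a, 1:]"
  shows "poly (smult lc (lprod cs)) a \<noteq> 0 \<and>
    v [:poly (smult lc (lprod cs)) a:] = v (smult lc (lprod cs))"
proof -
  have "poly (lprod cs) a = prod_list (map (\<lambda>c. a - c) cs)"
    by (induction cs) (simp_all add: left_diff_distrib)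
  hence eq: "poly (smult lc (lprod cs)) a = prod_list (lc # map (\<lambda>c. a - c) cs)"
    by simp
  have nz: "0 \<notin> set (lc # map (\<lambda>c. a - c) cs)" using assms by force
  show ?thesis
    using const.val_prod_list[OF nz] val_smult_lprod[OF assms(1)] assms(2) nz
    unfolding eq by (simp add: o_def const_val_diff_eq prod_list_zero_iff cong: map_cong)
qed


section \<open>Roots of a key polynomial and of smaller polynomials\<close>

lemma optimizing_root_linear_factors:
  assumes roots: "\<forall>p::'a poly. 0 < degree p \<longrightarrow> (\<exists>z. poly p z = 0)"
    and "lead_coeff Q = 1" "optimizing_root v Q a"
  obtains qs where "Q = smult 1 (lprod qs)" "\<forall>c\<in>set qs. v [:-c, 1:] \<le> v [:-a, 1:]"
proof -
  have "Q \<noteq> 0" using assms(2) by auto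
  then obtain qs where qs: "Q = smult 1 (lprod qs)"
    using split_into_linear_factors[OF roots] assms(2) by metis
  moreover have "\<forall>c\<in>set qs. v [:-c, 1:] \<le> v [:-a, 1:]"
    using assms(3) poly_lprod_eq_0_iff qs unfolding optimizing_root_def by auto
  ultimately show thesis by (rule that)
qed

lemma hasse_deriv_bound_of_optimizing_root:
  assumes roots: "\<forall>p::'a poly. 0 < degree p \<longrightarrow> (\<exists>z. poly p z = 0)"
    and "lead_coeff Q = 1" "optimizing_root v Q a" "hasse_deriv b Q \<noteq> 0"
  shows "v Q - v (hasse_deriv b Q) \<le> nsmul b (v [:-a, 1:])"
proof -
  obtain qs where qs: "Q = smult 1 (lprod qs)" and le: "\<forall>c\<in>set qs. v [:-c, 1:] \<le> v [:-a, 1:]"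
    using optimizing_root_linear_factors[OF assms(1-3)] .
  from last_hasse_minimizer_split[OF _ le, of 1]
  have "last_hasse_minimizer (v [:-a, 1:]) Q (length (filter (\<lambda>c. v [:-c, 1:] = v [:-a, 1:]) qs))"
    using qs by simp
  thus ?thesis
    using assms(4) unfolding last_hasse_minimizer_def by (simp add: diff_le_eq add.commute)
qed

lemma exists_hasse_slope_above_root:
  assumes roots: "\<forall>p::'a poly. 0 < degree p \<longrightarrow> (\<exists>z. poly p z = 0)"
    and h: "h \<noteq> 0" "poly h d = 0"
  obtains D s where "v [:-d, 1:] \<le> D" "s \<in> {1..degree h}" "hasse_deriv s h \<noteq> 0"
    "v h - v (hasse_deriv s h) = nsmul s D"
proof -
  obtain hs where hs: "h = smult (lead_coeff h) (lprod hs)" "length hs = degree h"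
    using split_into_linear_factors[OF roots h(1)] by metis
  have d: "d \<in> set hs" using h poly_lprod_eq_0_iff[of hs d] by (subst (asm) hs(1)) simp
  define D where "D = Max ((\<lambda>c. v [:-c, 1:]) ` set hs)"
  have D_ge: "\<forall>c\<in>set hs. v [:-c, 1:] \<le> D" unfolding D_def by simp
  have "D \<in> (\<lambda>c. v [:-c, 1:]) ` set hs"
    unfolding D_def using d by (intro Max_in) auto
  hence "filter (\<lambda>c. v [:-c, 1:] = D) hs \<noteq> []" by (auto simp: filter_empty_conv)
  moreover define s where "s = length (filter (\<lambda>c. v [:-c, 1:] = D) hs)"
  ultimately have s: "s \<in> {1..degree h}"
    using hs(2) length_filter_le[of _ hs] by (auto simp: Suc_le_eq)
  have "last_hasse_minimizer D h s"
    using last_hasse_minimizer_split[OF _ D_ge, of "lead_coeff h"] h(1)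
    unfolding s_def hs(1)[symmetric] by simp
  hence "hasse_deriv s h \<noteq> 0" "v h - v (hasse_deriv s h) = nsmul s D"
    unfolding last_hasse_minimizer_def by (auto simp: algebra_simps)
  with D_ge d s show thesis by (intro that) auto
qed

lemma val_linear_factor_lt_of_key_polynomial:
  fixes \<nu> :: "'a poly \<Rightarrow> 'g"
  assumes closure: "is_algebraic_closure_of K"
    and agree: "\<forall>f\<in>Kpoly K. f \<noteq> 0 \<longrightarrow> v f = \<nu> f"
    and key: "key_polynomial K \<nu> Q" and opt: "optimizing_root v Q a"
    and h: "h \<in> Kpoly K" "h \<noteq> 0" "degree h < degree Q" and root: "poly h d = 0"
  shows "v [:-d, 1:] < v [:-a, 1:]"
proof (rule ccontr)
  assume "\<not> v [:-d, 1:] < v [:-a, 1:]"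
  hence da: "v [:-a, 1:] \<le> v [:-d, 1:]" by simp
  have K: "is_subfield K" and roots: "\<forall>p::'a poly. 0 < degree p \<longrightarrow> (\<exists>z. poly p z = 0)"
    using closure unfolding is_algebraic_closure_of_def by auto
  have QK: "Q \<in> Kpoly K" and Q1: "lead_coeff Q = 1"
    and Q_least: "\<And>f. f \<in> Kpoly K \<Longrightarrow> f \<noteq> 0 \<Longrightarrow> eps_ge \<nu> f Q \<Longrightarrow> degree Q \<le> degree f"
    using key unfolding key_polynomial_def by auto
  have dQ: "0 < degree Q" using opt unfolding optimizing_root_def by auto
  obtain D s where dD: "v [:-d, 1:] \<le> D" and s: "s \<in> {1..degree h}" "hasse_deriv s h \<noteq> 0"
    and slope: "v h - v (hasse_deriv s h) = nsmul s D"
    using exists_hasse_slope_above_root[OF roots h(2) root] .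
  have "eps_ge \<nu> h Q"
  proof (rule eps_geI[OF dQ s])
    show "\<nu> h - \<nu> (hasse_deriv s h) = nsmul s D"
      using slope agree h Kpoly_hasse_deriv[OF K] s(2) by auto
    fix b assume b: "hasse_deriv b Q \<noteq> 0"
    have "v Q - v (hasse_deriv b Q) \<le> nsmul b (v [:-a, 1:])"
      by (rule hasse_deriv_bound_of_optimizing_root[OF roots Q1 opt b])
    also have "\<dots> \<le> nsmul b D" using da dD by (intro nsmul_mono) simp
    finally show "\<nu> Q - \<nu> (hasse_deriv b Q) \<le> nsmul b D"
      using agree QK Kpoly_hasse_deriv[OF K QK] Q1 b by auto
  qed
  thus False using Q_least[OF h(1,2)] h(3) by simp
qed

lemma trunc_val_eq_of_optimizing_root:
  assumes roots: "\<forall>p::'a poly. 0 < degree p \<longrightarrow> (\<exists>z. poly p z = 0)"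
    and "lead_coeff Q = 1" "optimizing_root v Q a"
  shows "trunc_val v a Q = v Q"
proof -
  obtain qs where "Q = smult 1 (lprod qs)" "\<forall>c\<in>set qs. v [:-c, 1:] \<le> v [:-a, 1:]"
    using optimizing_root_linear_factors[OF assms] .
  with trunc_val_smult_lprod[of 1 qs] show ?thesis by simp
qed

lemma trunc_val_eq_eval_of_closer_roots:
  assumes roots: "\<forall>p::'a poly. 0 < degree p \<longrightarrow> (\<exists>z. poly p z = 0)"
    and "h \<noteq> 0" "\<And>d. poly h d = 0 \<Longrightarrow> v [:-d, 1:] < v [:-a, 1:]"
  shows "trunc_val v a h = v h \<and> poly h a \<noteq> 0 \<and> v [:poly h a:] = v h"
proof -
  obtain hs where hs: "h = smult (lead_coeff h) (lprod hs)"
    using split_into_linear_factors[OF roots assms(2)] by metis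
  have "\<forall>c\<in>set hs. v [:-c, 1:] < v [:-a, 1:]"
    using assms(2,3) poly_lprod_eq_0_iff[of hs] by (subst (asm) (2) hs) auto
  with trunc_val_smult_lprod[of "lead_coeff h" hs] eval_smult_lprod[of "lead_coeff h" hs] assms(2)
  show ?thesis unfolding hs[symmetric] by (simp add: less_imp_le)
qed

section \<open>Transcendence of the residue\<close>

context
  fixes a :: 'a and R h :: "'a poly"
  assumes eval_bound: "\<And>f. poly f a \<noteq> 0 \<Longrightarrow> v f \<le> v [:poly f a:]"
    and R: "R \<noteq> 0" "poly R a = 0" "v R = v h"
    and h: "poly h a \<noteq> 0" "v [:poly h a:] = v h"
begin

private lemma h_nonzero: "h \<noteq> 0"
  using h(1) by auto

lemma val_smult_power_mult_power:
  assumes "c \<noteq> 0"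
  shows "v (smult c (R ^ k * h ^ l)) = v [:c:] + nsmul (k + l) (v h)"
  using val_mult[of "[:c:]" "R ^ k * h ^ l"] val_mult[of "R ^ k" "h ^ l"] assms R h_nonzero
  by (simp add: val_power nsmul_add)

lemma val_tail_sum:
  assumes j: "j \<le> n" "c j \<noteq> 0" "v [:c j:] = 0" and c: "\<forall>i\<in>{j..n}. c i = 0 \<or> 0 \<le> v [:c i:]"
  defines "B \<equiv> \<Sum>i\<in>{j..n}. smult (c i) (R ^ (i - j) * h ^ (n - i))"
  shows "B \<noteq> 0 \<and> v B = nsmul (n - j) (v h)"
proof -
  have "poly B a = c j * poly h a ^ (n - j)"
  proof -
    have "poly B a = c j * poly h a ^ (n - j) +
        (\<Sum>i\<in>{j..n} - {j}. c i * (poly R a ^ (i - j) * poly h a ^ (n - i)))"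
      unfolding B_def poly_sum using j(1) by (subst sum.remove[of _ j]) auto
    also have "(\<Sum>i\<in>{j..n} - {j}. c i * (poly R a ^ (i - j) * poly h a ^ (n - i))) = 0"
      using R(2) by (intro sum.neutral) auto
    finally show ?thesis by simp
  qed
  moreover have "c j * poly h a ^ (n - j) \<noteq> 0" using j(2) h(1) by simp
  moreover have "v [:c j * poly h a ^ (n - j):] = nsmul (n - j) (v h)"
    using j(2,3) h const.val_mult const.val_power by simp
  ultimately have B: "B \<noteq> 0" "v B \<le> nsmul (n - j) (v h)"
    using eval_bound[of B] by auto
  have "nsmul (n - j) (v h) \<le> v B"
    unfolding B_def
  proof (rule val_sum_geI)
    fix i assume i: "i \<in> {j..n}" and nz: "smult (c i) (R ^ (i - j) * h ^ (n - i)) \<noteq> 0"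
    hence "c i \<noteq> 0" by auto
    moreover have "0 \<le> v [:c i:]" using c i \<open>c i \<noteq> 0\<close> by blast
    ultimately show "nsmul (n - j) (v h) \<le> v (smult (c i) (R ^ (i - j) * h ^ (n - i)))"
      using i by (simp add: val_smult_power_mult_power)
  qed (use B in \<open>simp_all add: B_def\<close>)
  with B show ?thesis by simp
qed

lemma val_weighted_power_sum:
  assumes c: "\<forall>i\<le>n. c i = 0 \<or> 0 \<le> v [:c i:]" "\<exists>i\<le>n. c i \<noteq> 0 \<and> v [:c i:] \<le> 0"
  defines "P \<equiv> \<Sum>i\<le>n. smult (c i) (R ^ i * h ^ (n - i))"
  shows "P \<noteq> 0 \<and> v P = nsmul n (v h)"
proof -
  define j where "j = (LEAST i. i \<le> n \<and> c i \<noteq> 0 \<and> v [:c i:] \<le> 0)"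
  have j: "j \<le> n" "c j \<noteq> 0" "v [:c j:] = 0"
    using LeastI_ex[OF c(2)] c(1) unfolding j_def[symmetric] by (auto intro: antisym)
  have below: "0 < v [:c i:]" if "i < j" "c i \<noteq> 0" for i
    using not_less_Least[OF that(1)[unfolded j_def]] c(1) that j(1) by fastforce
  define A where "A = (\<Sum>i<j. smult (c i) (R ^ i * h ^ (n - i)))"
  define B where "B = (\<Sum>i\<in>{j..n}. smult (c i) (R ^ (i - j) * h ^ (n - i)))"
  have "P = A + (\<Sum>i\<in>{j..n}. smult (c i) (R ^ i * h ^ (n - i)))"
    unfolding P_def A_def using j(1)
    by (subst sum.union_disjoint[symmetric]) (auto intro!: sum.cong)
  also have "(\<Sum>i\<in>{j..n}. smult (c i) (R ^ i * h ^ (n - i))) = R ^ j * B"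
    unfolding B_def sum_distrib_left
    by (intro sum.cong) (simp_all add: mult.assoc[symmetric] flip: power_add)
  finally have P: "P = A + R ^ j * B" .
  have B: "B \<noteq> 0 \<and> v B = nsmul (n - j) (v h)"
    unfolding B_def using j c(1) by (intro val_tail_sum) auto
  hence G: "R ^ j * B \<noteq> 0 \<and> v (R ^ j * B) = nsmul n (v h)"
    using R j(1) by (simp add: val_mult val_power nsmul_add[symmetric])
  have "nsmul n (v h) < v A" if "A \<noteq> 0"
    unfolding A_def
  proof (rule val_sum_gtI)
    fix i assume i: "i \<in> {..<j}" and nz: "smult (c i) (R ^ i * h ^ (n - i)) \<noteq> 0"
    hence "c i \<noteq> 0" by auto
    thus "nsmul n (v h) < v (smult (c i) (R ^ i * h ^ (n - i)))"
      using below[of i] i j(1) by (simp add: val_smult_power_mult_power)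
  qed (use that in \<open>simp_all add: A_def\<close>)
  with G show ?thesis
    using val_add_eq_strict[of "R ^ j * B" A] unfolding P by (simp add: add.commute)
qed

end

lemma trunc_val_frac_Fract:
  assumes "p \<noteq> 0" "q \<noteq> 0"
  shows "trunc_val_frac v a (Fract p q) = trunc_val v a p - trunc_val v a q"
proof -
  interpret tv: valuation "trunc_val v a" by (rule valuation_trunc_val)
  define pq where "pq = (SOME pq. snd pq \<noteq> 0 \<and> Fract p q = Fract (fst pq) (snd pq))"
  have "\<exists>pq. snd pq \<noteq> 0 \<and> Fract p q = Fract (fst pq) (snd pq)"
    using assms by (intro exI[of _ "(p, q)"]) auto
  hence "snd pq \<noteq> 0 \<and> Fract p q = Fract (fst pq) (snd pq)" unfolding pq_def by (rule someI_ex)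
  moreover obtain p' q' where pq': "pq = (p', q')" by (cases pq)
  ultimately have q': "q' \<noteq> 0" and cross: "p * q' = p' * q" using assms eq_fract(1) by auto
  hence "p' \<noteq> 0" using assms by auto
  hence "trunc_val v a p + trunc_val v a q' = trunc_val v a p' + trunc_val v a q"
    using tv.val_mult[OF assms(1) q'] tv.val_mult[of p' q] assms(2) cross by simp
  hence "trunc_val v a p' - trunc_val v a q' = trunc_val v a p - trunc_val v a q"
    by (simp add: algebra_simps)
  thus ?thesis unfolding trunc_val_frac_def pq_def[symmetric] pq' by simp
qed

lemma trunc_val_frac_weighted_power_sum:
  assumes R: "R \<noteq> 0" "poly R a = 0" "trunc_val v a R = trunc_val v a h"
    and h: "poly h a \<noteq> 0" "v [:poly h a:] = trunc_val v a h"
    and c: "\<forall>i\<le>n. c i = 0 \<or> 0 \<le> v [:c i:]" "\<exists>i\<le>n. c i \<noteq> 0 \<and> v [:c i:] \<le> 0"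
  defines "S \<equiv> \<Sum>i\<le>n. Fract [:c i:] 1 * Fract R h ^ i"
  shows "S \<noteq> 0 \<and> trunc_val_frac v a S = 0"
proof -
  interpret tv: poly_valuation "trunc_val v a"
    by (rule poly_valuation.intro, rule valuation_trunc_val)
  define P where "P = (\<Sum>i\<le>n. smult (c i) (R ^ i * h ^ (n - i)))"
  have "\<forall>i\<le>n. c i = 0 \<or> 0 \<le> trunc_val v a [:c i:]"
    using c(1) by (metis trunc_val_const)
  moreover have "\<exists>i\<le>n. c i \<noteq> 0 \<and> trunc_val v a [:c i:] \<le> 0"
    using c(2) by (metis trunc_val_const)
  moreover have "trunc_val v a [:poly h a:] = trunc_val v a h"
    using h by (simp add: trunc_val_const)
  ultimately have "P \<noteq> 0 \<and> trunc_val v a P = nsmul n (trunc_val v a h)"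
    unfolding P_def using trunc_val_le_eval R h(1)
    by (intro tv.val_weighted_power_sum[of a]) (simp_all add: trunc_val_const)
  moreover have "h \<noteq> 0" using h(1) by auto
  moreover have "S = Fract P (h ^ n)"
    unfolding S_def P_def Fract_conv_to_fract using \<open>h \<noteq> 0\<close>
    by (simp add: sum_mult_power_divide to_fract_power to_fract_smult mult.assoc)
  ultimately show ?thesis
    by (simp add: trunc_val_frac_Fract tv.val_power eq_fract Zero_fract_def)
qed

end

theorem proposition3p7:
  fixes K :: "'L::field set"
    and \<nu> \<mu> :: "'L poly \<Rightarrow> 'g::linordered_ab_group_add"
    and Q h :: "'L poly" and a :: 'L and e :: nat
  assumes "is_algebraic_closure_of K"
    and "valuation_on (Kpoly K) \<nu>"
    and "valuation_on UNIV \<mu>"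
    and "\<forall>f\<in>Kpoly K. f \<noteq> 0 \<longrightarrow> \<mu> f = \<nu> f"
    and "key_polynomial K \<nu> Q"
    and "optimizing_root \<mu> Q a"
    and "1 \<le> e"
    and "h \<in> Kpoly K" and "h \<noteq> 0" and "degree h < degree Q"
    and "\<nu> (Q ^ e) = \<nu> h"
  shows "trunc_val_frac \<mu> a (Fract (Q ^ e) h) = 0 \<and>
         residue_transcendental (trunc_val_frac \<mu> a) (\<lambda>c. Fract [:c:] 1) (\<lambda>c. \<mu> [:c:])
           (Fract (Q ^ e) h)"
proof -
  interpret poly_valuation \<mu> by unfold_locales (rule assms(3))
  have roots: "\<forall>p::'L poly. 0 < degree p \<longrightarrow> (\<exists>z. poly p z = 0)" and K: "is_subfield K"
    using assms(1) unfolding is_algebraic_closure_of_def by auto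
  have Q: "Q \<in> Kpoly K" "lead_coeff Q = 1" "Q \<noteq> 0" "poly (Q ^ e) a = 0"
    using assms(5-7) unfolding key_polynomial_def optimizing_root_def by auto
  have tvQ: "trunc_val \<mu> a Q = \<mu> Q"
    using trunc_val_eq_of_optimizing_root[OF roots Q(2) assms(6)] .
  have tvh: "trunc_val \<mu> a h = \<mu> h" "poly h a \<noteq> 0" "\<mu> [:poly h a:] = \<mu> h"
    using trunc_val_eq_eval_of_closer_roots[OF roots assms(9)]
      val_linear_factor_lt_of_key_polynomial[OF assms(1,4,5,6,8,9,10)] by auto
  have "\<mu> (Q ^ e) = \<mu> h"
    using assms(4,8,9,11) Kpoly_power[OF K Q(1)] Q(3) by simp
  hence tvR: "trunc_val \<mu> a (Q ^ e) = trunc_val \<mu> a h"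
    using valuation.val_power[OF valuation_trunc_val] val_power Q(3) tvQ tvh(1) by simp
  have "trunc_val_frac \<mu> a (Fract (Q ^ e) h) = 0"
    using trunc_val_frac_Fract[of "Q ^ e" h] tvR Q(3) assms(9) by simp
  thus ?thesis
    using trunc_val_frac_weighted_power_sum[OF _ Q(4) tvR tvh(2)] tvh Q(3)
    unfolding residue_transcendental_def in_val_ring_def in_max_ideal_def by (auto simp: not_less)
qed

end
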